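(* Let $n \ge 1$ and let $a_1, \dots, a_n$ be positive real numbers with $\sum_{i=1}^n a_i = 1$. Consider vectors $u_{(i,t)}$ indexed by $(i,t) \in [n] \times [3]$ subject to the following constraints: (1) $u_{(i,t)} \cdot u_{(i,t)} = 1$ for all $(i,t)$; (2) $u_{(i,1)} \cdot u_{(i,2)} = 0$ for all $i \in [n]$; (3) $u_{(i,3)} \cdot u_{(i,1)} = u_{(i,3)} \cdot u_{(i,2)} = \frac{1}{\sqrt{2}}$ for all $i \in [n]$; (4) $u_{(i,1)} \cdot u_{(i+1,1)} = u_{(i,2)} \cdot u_{(i+1,2)} = u_{(i,3)} \cdot u_{(i+1,3)} = \cos a_i$ for all $i \in [n]$, where the index $i+1$ is taken modulo $n$ (so $n+1$ means $1$). Then there exists a family of vectors in $\mathbb{R}^3$ satisfying these constraints if and only if there exists a family of vectors in $\mathbb{R}^2$ satisfying these constraints. *)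

theory Defs
  imports "HOL-Analysis.Analysis"
begin

text \<open>Indices are 0-based: i ranges over {0..<n} (paper: 1..n), t over {0,1,2}
  (paper: 1,2,3). The successor index i+1 is taken modulo n.\<close>

definition sdp_constraints ::
  "nat \<Rightarrow> (nat \<Rightarrow> real) \<Rightarrow> (nat \<Rightarrow> nat \<Rightarrow> 'v::real_inner) \<Rightarrow> bool" where
  "sdp_constraints n a u \<longleftrightarrow>
     (\<forall>i<n. \<forall>t<3. u i t \<bullet> u i t = 1) \<and>
     (\<forall>i<n. u i 0 \<bullet> u i 1 = 0) \<and>
     (\<forall>i<n. u i 2 \<bullet> u i 0 = 1 / sqrt 2 \<and> u i 2 \<bullet> u i 1 = 1 / sqrt 2) \<and>
     (\<forall>i<n. \<forall>t<3. u i t \<bullet> u (Suc i mod n) t = cos (a i))"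

end

theory Submission
  imports Defs
begin

(* The unit vector u_(i,3) making angle pi/4 with the orthonormal pair u_(i,1), u_(i,2) is
   forced to be their bisector (u_(i,1) + u_(i,2)) / sqrt 2. Expanding the constraint on the
   bisectors of consecutive triples, the cross terms u_(i,1) . u_(i+1,2) + u_(i,2) . u_(i+1,1)
   cancel. Hence the components of u_(i+1,1), u_(i+1,2) orthogonal to the plane of u_(i,1),
   u_(i,2) are orthogonal to each other and of equal length; in R^3 that orthogonal complement
   is a line, so both components vanish. Thus all vectors of a solution in R^3 lie in one
   plane, and orthonormal coordinates in that plane give a solution in R^2; conversely R^2
   embeds isometrically into R^3. *)

definition orthonormal_pair :: "'a::real_inner \<Rightarrow> 'a \<Rightarrow> bool" where
  "orthonormal_pair e1 e2 \<longleftrightarrow> e1 \<bullet> e1 = 1 \<and> e2 \<bullet> e2 = 1 \<and> e1 \<bullet> e2 = 0"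

definition plane_proj :: "'a::real_inner \<Rightarrow> 'a \<Rightarrow> 'a \<Rightarrow> 'a" where
  "plane_proj e1 e2 x = (x \<bullet> e1) *\<^sub>R e1 + (x \<bullet> e2) *\<^sub>R e2"

lemma plane_proj_in_span: "plane_proj e1 e2 x \<in> span {e1, e2}"
  unfolding plane_proj_def by (intro span_add span_mul span_base) auto

lemma plane_proj_residual_orthogonal:
  assumes "orthonormal_pair e1 e2"
  shows "(x - plane_proj e1 e2 x) \<bullet> e1 = 0" "(x - plane_proj e1 e2 x) \<bullet> e2 = 0"
  using assms by (simp_all add: orthonormal_pair_def plane_proj_def inner_diff_left
      inner_add_left inner_commute[of e2 e1])

lemma inner_plane_proj_residuals:
  assumes "orthonormal_pair e1 e2"
  shows "(x - plane_proj e1 e2 x) \<bullet> (y - plane_proj e1 e2 y)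
           = x \<bullet> y - (x \<bullet> e1) * (y \<bullet> e1) - (x \<bullet> e2) * (y \<bullet> e2)"
proof -
  have "(x - plane_proj e1 e2 x) \<bullet> plane_proj e1 e2 y = 0"
    using plane_proj_residual_orthogonal[OF assms, of x] by (simp add: plane_proj_def inner_add_right)
  then have "(x - plane_proj e1 e2 x) \<bullet> (y - plane_proj e1 e2 y) = (x - plane_proj e1 e2 x) \<bullet> y"
    by (simp only: inner_diff_right)
  also have "\<dots> = x \<bullet> y - (x \<bullet> e1) * (y \<bullet> e1) - (x \<bullet> e2) * (y \<bullet> e2)"
    by (simp add: plane_proj_def inner_diff_left inner_add_left inner_commute[of e1 y] inner_commute[of e2 y])
  finally show ?thesis .
qed

lemma plane_proj_eq_self:
  assumes "orthonormal_pair e1 e2" "x \<in> span {e1, e2}"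
  shows "plane_proj e1 e2 x = x"
proof -
  obtain k1 k2 where x: "x = k1 *\<^sub>R e1 + k2 *\<^sub>R e2"
    using assms(2) by (auto simp: span_insert span_singleton algebra_simps)
  have "x \<bullet> e1 = k1" "x \<bullet> e2 = k2"
    using assms(1) by (simp_all add: x orthonormal_pair_def inner_add_left inner_commute[of e2 e1])
  then show ?thesis by (simp add: plane_proj_def x)
qed

lemma inner_in_plane:
  assumes "orthonormal_pair e1 e2" "x \<in> span {e1, e2}" "y \<in> span {e1, e2}"
  shows "x \<bullet> y = (x \<bullet> e1) * (y \<bullet> e1) + (x \<bullet> e2) * (y \<bullet> e2)"
  using inner_plane_proj_residuals[OF assms(1), of x y] plane_proj_eq_self[OF assms(1)] assms(2,3)
  by simp

lemma inner_coords:
  assumes "orthonormal_pair b1 b2"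
  shows "(x1 *\<^sub>R b1 + x2 *\<^sub>R b2) \<bullet> (y1 *\<^sub>R b1 + y2 *\<^sub>R b2) = x1 * y1 + x2 * y2"
  using assms by (simp add: orthonormal_pair_def inner_add_left inner_add_right inner_commute)

lemma orthonormal_pair_axis:
  "orthonormal_pair (axis 1 1 :: real^'n::{finite,numeral}) (axis 2 1) \<longleftrightarrow> (1::'n) \<noteq> 2"
  by (simp add: orthonormal_pair_def inner_axis_axis)

lemma span_axis_1_2: "(w :: real^2) \<in> span {axis 1 1, axis 2 1}"
proof -
  have "w = plane_proj (axis 1 1) (axis 2 1) w"
    unfolding plane_proj_def inner_axis by (simp add: vec_eq_iff forall_2 axis_def)
  then show ?thesis by (metis plane_proj_in_span)
qed

lemma orthogonal_to_plane_equal_norm_eq_0: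
  fixes e1 e2 r1 r2 :: "'a::euclidean_space"
  assumes "DIM('a) \<le> 3" "orthonormal_pair e1 e2"
    and "r1 \<bullet> e1 = 0" "r1 \<bullet> e2 = 0" "r2 \<bullet> e1 = 0" "r2 \<bullet> e2 = 0"
    and "r1 \<bullet> r2 = 0" "r1 \<bullet> r1 = r2 \<bullet> r2"
  shows "r1 = 0"
proof (rule ccontr)
  assume "r1 \<noteq> 0"
  then have r: "r1 \<bullet> r1 > 0" "r2 \<bullet> r2 > 0" using assms(8) by auto
  define S where "S = {e1, e2, r1, r2}"
  have e: "e1 \<bullet> e1 = 1" "e2 \<bullet> e2 = 1" "e1 \<bullet> e2 = 0"
    using assms(2) by (auto simp: orthonormal_pair_def)
  have "pairwise orthogonal S"
    using assms(3-7) e by (auto simp: S_def pairwise_def orthogonal_def inner_commute)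
  moreover have "0 \<notin> S" using e r by (auto simp: S_def)
  ultimately have "card S \<le> DIM('a)"
    using pairwise_orthogonal_independent independent_bound by blast
  moreover have "card S = 4"
  proof -
    have "e1 \<noteq> e2" "e1 \<notin> {r1, r2}" "e2 \<notin> {r1, r2}" "r1 \<noteq> r2"
      using assms(3-7) e r by (auto simp: inner_commute)
    then show ?thesis by (simp add: S_def)
  qed
  ultimately show False using assms(1) by simp
qed

text \<open>The hypotheses say that the projections of \<open>f1\<close>, \<open>f2\<close> to the plane
  are a rotation of \<open>e1\<close>, \<open>e2\<close> scaled by the same factor; so the residuals are
  orthogonal and of equal length, and in dimension 3 this forces them to vanish.\<close>

lemma orthonormal_pair_in_plane:
  fixes e1 e2 f1 f2 :: "'a::euclidean_space"
  assumes "DIM('a) \<le> 3" "orthonormal_pair e1 e2" "orthonormal_pair f1 f2"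
    and "f1 \<bullet> e1 = f2 \<bullet> e2" "f1 \<bullet> e2 + f2 \<bullet> e1 = 0"
  shows "f1 \<in> span {e1, e2}" "f2 \<in> span {e1, e2}"
proof -
  define r where "r x = x - plane_proj e1 e2 x" for x
  have perp: "r x \<bullet> e1 = 0" "r x \<bullet> e2 = 0" for x
    using plane_proj_residual_orthogonal[OF assms(2)] by (simp_all add: r_def)
  have f: "f1 \<bullet> f1 = 1" "f2 \<bullet> f2 = 1" "f1 \<bullet> f2 = 0"
    using assms(3) by (auto simp: orthonormal_pair_def)
  have res: "r x \<bullet> r y = x \<bullet> y - (x \<bullet> e1) * (y \<bullet> e1) - (x \<bullet> e2) * (y \<bullet> e2)" for x y
    using inner_plane_proj_residuals[OF assms(2)] by (simp add: r_def)
  have f2e: "f2 \<bullet> e1 = - (f1 \<bullet> e2)" "f2 \<bullet> e2 = f1 \<bullet> e1" using assms(4,5) by simp_all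
  have "r f1 \<bullet> r f2 = 0" "r f2 \<bullet> r f1 = 0"
    using res[of f1 f2] res[of f2 f1] f f2e by (simp_all add: inner_commute[of f2 f1])
  moreover have "r f1 \<bullet> r f1 = r f2 \<bullet> r f2"
    using res[of f1 f1] res[of f2 f2] f f2e by simp
  ultimately have "r f1 = 0" "r f2 = 0"
    using orthogonal_to_plane_equal_norm_eq_0[OF assms(1,2) perp perp] by metis+
  then show "f1 \<in> span {e1, e2}" "f2 \<in> span {e1, e2}"
    by (metis r_def plane_proj_in_span eq_iff_diff_eq_0)+
qed

lemma bisector_unique:
  assumes "orthonormal_pair u0 u1" "w \<bullet> w = 1" "w \<bullet> u0 = 1 / sqrt 2" "w \<bullet> u1 = 1 / sqrt 2"
  shows "w = (1 / sqrt 2) *\<^sub>R (u0 + u1)"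
proof -
  define d where "d = w - (1 / sqrt 2) *\<^sub>R (u0 + u1)"
  have "d \<bullet> u0 = 0" "d \<bullet> u1 = 0"
    using assms by (simp_all add: d_def orthonormal_pair_def inner_diff_left inner_add_left
        inner_commute[of u1 u0])
  moreover have "d \<bullet> w = 0"
    using assms(2-4)
    by (simp add: d_def inner_diff_left inner_add_left inner_commute[of u0 w] inner_commute[of u1 w])
  moreover have "d \<bullet> d = d \<bullet> w - (1 / sqrt 2) * (d \<bullet> u0 + d \<bullet> u1)"
    using inner_diff_right[of d w "(1 / sqrt 2) *\<^sub>R (u0 + u1)"]
    by (simp add: d_def[symmetric] inner_add_right)
  ultimately have "d \<bullet> d = 0" by simp
  then show ?thesis by (simp add: d_def)
qed

lemma inner_bisectors:
  "((1 / sqrt 2) *\<^sub>R (g1 + g2)) \<bullet> ((1 / sqrt 2) *\<^sub>R (f1 + f2))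
     = (g1 \<bullet> f1 + g1 \<bullet> f2 + g2 \<bullet> f1 + g2 \<bullet> f2) / 2"
proof -
  have "((1 / sqrt 2) *\<^sub>R (g1 + g2)) \<bullet> ((1 / sqrt 2) *\<^sub>R (f1 + f2)) = ((g1 + g2) \<bullet> (f1 + f2)) / 2"
    by simp
  then show ?thesis by (simp add: inner_add_left inner_add_right)
qed

lemma sdp_constraints_frame:
  assumes "sdp_constraints n a u" "i < n"
  shows "orthonormal_pair (u i 0) (u i 1)" "u i 2 = (1 / sqrt 2) *\<^sub>R (u i 0 + u i 1)"
proof -
  show frame: "orthonormal_pair (u i 0) (u i 1)"
    using assms by (simp add: sdp_constraints_def orthonormal_pair_def)
  show "u i 2 = (1 / sqrt 2) *\<^sub>R (u i 0 + u i 1)"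
    using assms by (intro bisector_unique[OF frame]) (simp_all add: sdp_constraints_def)
qed

lemma sdp_constraints_next_frame_in_plane:
  fixes u :: "nat \<Rightarrow> nat \<Rightarrow> 'a::euclidean_space"
  assumes "DIM('a) \<le> 3" "sdp_constraints n a u" "Suc i < n"
  shows "u (Suc i) 0 \<in> span {u i 0, u i 1}" "u (Suc i) 1 \<in> span {u i 0, u i 1}"
proof -
  have i: "i < n" using assms(3) by simp
  have "\<forall>t<3. u i t \<bullet> u (Suc i mod n) t = cos (a i)"
    using assms(2) i by (simp add: sdp_constraints_def)
  then have c: "u i t \<bullet> u (Suc i) t = cos (a i)" if "t < 3" for t
    using assms(3) that by simp
  have "u i 2 \<bullet> u (Suc i) 2 = cos (a i)" using c by simp
  then have "u (Suc i) 0 \<bullet> u i 1 + u (Suc i) 1 \<bullet> u i 0 = 0"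
    using c[of 0] c[of 1] inner_bisectors[of "u i 0" "u i 1" "u (Suc i) 0" "u (Suc i) 1"]
      sdp_constraints_frame(2)[OF assms(2) i] sdp_constraints_frame(2)[OF assms(2,3)]
    by (simp add: inner_commute)
  then show "u (Suc i) 0 \<in> span {u i 0, u i 1}" "u (Suc i) 1 \<in> span {u i 0, u i 1}"
    using orthonormal_pair_in_plane[OF assms(1) sdp_constraints_frame(1)[OF assms(2) i]
        sdp_constraints_frame(1)[OF assms(2,3)]] c[of 0] c[of 1]
    by (simp_all add: inner_commute)
qed

lemma sdp_constraints_in_first_plane:
  fixes u :: "nat \<Rightarrow> nat \<Rightarrow> 'a::euclidean_space"
  assumes "DIM('a) \<le> 3" "sdp_constraints n a u" "i < n" "t < 3"
  shows "u i t \<in> span {u 0 0, u 0 1}"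
proof -
  let ?S = "span {u 0 0, u 0 1}"
  have frame: "u i 0 \<in> ?S \<and> u i 1 \<in> ?S" if "i < n" for i
    using that
  proof (induction i)
    case 0
    then show ?case by (simp add: span_base)
  next
    case (Suc i)
    then have "span {u i 0, u i 1} \<subseteq> ?S" by (simp add: span_minimal)
    then show ?case
      using sdp_constraints_next_frame_in_plane[OF assms(1,2) Suc.prems] by blast
  qed
  have "u i 2 \<in> ?S"
    using frame[OF assms(3)] sdp_constraints_frame(2)[OF assms(2,3)]
    by (simp add: span_add span_mul)
  moreover have "t = 0 \<or> t = 1 \<or> t = 2" using assms(4) by auto
  ultimately show ?thesis using frame[OF assms(3)] by auto
qed

lemma sdp_constraints_plane_coords:
  fixes u :: "nat \<Rightarrow> nat \<Rightarrow> 'v::real_inner" and b1 b2 :: "'w::real_inner"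
  assumes "orthonormal_pair e1 e2" "orthonormal_pair b1 b2"
    and "\<forall>i<n. \<forall>t<3. u i t \<in> span {e1, e2}" "sdp_constraints n a u"
  shows "sdp_constraints n a (\<lambda>i t. (u i t \<bullet> e1) *\<^sub>R b1 + (u i t \<bullet> e2) *\<^sub>R b2)"
proof -
  have "((u i t \<bullet> e1) *\<^sub>R b1 + (u i t \<bullet> e2) *\<^sub>R b2) \<bullet> ((u j s \<bullet> e1) *\<^sub>R b1 + (u j s \<bullet> e2) *\<^sub>R b2)
          = u i t \<bullet> u j s" if "i < n" "t < 3" "j < n" "s < 3" for i j t s
    using inner_coords[OF assms(2)] inner_in_plane[OF assms(1)] assms(3) that by simp
  moreover have "Suc i mod n < n" if "i < n" for i using that by simp
  ultimately show ?thesis using assms(4) by (simp add: sdp_constraints_def)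
qed

theorem lemma3p1:
  fixes n :: nat and a :: "nat \<Rightarrow> real"
  assumes "n \<ge> 1"
    and "\<forall>i<n. a i > 0"
    and "(\<Sum>i<n. a i) = 1"
  shows "(\<exists>u :: nat \<Rightarrow> nat \<Rightarrow> real^3. sdp_constraints n a u) \<longleftrightarrow>
         (\<exists>u :: nat \<Rightarrow> nat \<Rightarrow> real^2. sdp_constraints n a u)"
proof
  assume "\<exists>u :: nat \<Rightarrow> nat \<Rightarrow> real^3. sdp_constraints n a u"
  then obtain u :: "nat \<Rightarrow> nat \<Rightarrow> real^3" where u: "sdp_constraints n a u" by blast
  have "sdp_constraints n a (\<lambda>i t. (u i t \<bullet> u 0 0) *\<^sub>R (axis 1 1 :: real^2) + (u i t \<bullet> u 0 1) *\<^sub>R axis 2 1)"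
  proof (rule sdp_constraints_plane_coords[OF _ _ _ u])
    show "orthonormal_pair (u 0 0) (u 0 1)"
      using sdp_constraints_frame(1)[OF u] assms(1) by simp
    show "\<forall>i<n. \<forall>t<3. u i t \<in> span {u 0 0, u 0 1}"
      using sdp_constraints_in_first_plane[OF _ u] by simp
  qed (simp add: orthonormal_pair_axis)
  then show "\<exists>u :: nat \<Rightarrow> nat \<Rightarrow> real^2. sdp_constraints n a u" by blast
next
  assume "\<exists>u :: nat \<Rightarrow> nat \<Rightarrow> real^2. sdp_constraints n a u"
  then obtain u :: "nat \<Rightarrow> nat \<Rightarrow> real^2" where u: "sdp_constraints n a u" by blast
  have "sdp_constraints n a (\<lambda>i t. (u i t \<bullet> axis 1 1) *\<^sub>R (axis 1 1 :: real^3) + (u i t \<bullet> axis 2 1) *\<^sub>R axis 2 1)"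
    by (rule sdp_constraints_plane_coords[OF _ _ _ u]) (simp_all add: orthonormal_pair_axis span_axis_1_2)
  then show "\<exists>u :: nat \<Rightarrow> nat \<Rightarrow> real^3. sdp_constraints n a u" by blast
qed

end
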